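(* Let $G$ be the $m\times n$ grid with $m,n\ge 2$. For all $1\le z<z'<z''\le n$, the set $\{(1,z),(m,z'),(1,z'')\}$ is a landmark set of $G$.
   Context: The $m\times n$ grid $G$ has vertex set $V=\{(i,j):1\le i\le m,\ 1\le j\le n\}$, with $(i_1,j_1),(i_2,j_2)$ adjacent iff $|i_1-i_2|+|j_1-j_2|=1$; thus $d((i_1,j_1),(i_2,j_2))=|i_1-i_2|+|j_1-j_2|$. A vertex $x$ separates $u,v$ if $d(x,u)\neq d(x,v)$. A landmark set is $L\subseteq V$ such that every pair of distinct vertices is separated by some vertex of $L$. *)

theory Defs
  imports Main
begin

definition grid_vertices :: "nat \<Rightarrow> nat \<Rightarrow> (nat \<times> nat) set" where
  "grid_vertices m n = {(i, j). 1 \<le> i \<and> i \<le> m \<and> 1 \<le> j \<and> j \<le> n}"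

definition grid_dist :: "nat \<times> nat \<Rightarrow> nat \<times> nat \<Rightarrow> int" where
  "grid_dist u v = \<bar>int (fst u) - int (fst v)\<bar> + \<bar>int (snd u) - int (snd v)\<bar>"

definition separates :: "nat \<times> nat \<Rightarrow> nat \<times> nat \<Rightarrow> nat \<times> nat \<Rightarrow> bool" where
  "separates x u v \<longleftrightarrow> grid_dist x u \<noteq> grid_dist x v"

definition is_landmark_set :: "nat \<Rightarrow> nat \<Rightarrow> (nat \<times> nat) set \<Rightarrow> bool" where
  "is_landmark_set m n L \<longleftrightarrow> L \<subseteq> grid_vertices m n \<and>
     (\<forall>u\<in>grid_vertices m n. \<forall>v\<in>grid_vertices m n. u \<noteq> v \<longrightarrow> (\<exists>x\<in>L. separates x u v))"

end

theory Submission
  imports Defs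
begin

text \<open>Two landmarks in one row with columns \<open>z < z''\<close> see the same row offset, so they
  together measure \<open>\<bar>z - j\<bar> - \<bar>z'' - j\<bar>\<close>; this is strictly increasing in \<open>j\<close> on
  \<open>[z, z'']\<close> and constant on either side. The resulting three cases are settled by the
  landmark on the opposite row, whose column lies strictly between \<open>z\<close> and \<open>z''\<close>: left of
  both it measures \<open>i + j\<close> where the first landmark measures \<open>i - j\<close>, and symmetrically on
  the right.\<close>

lemma grid_dist_same_row_eq_cases:
  assumes "z < z''"
    and "grid_dist (a, z) (i, j) = grid_dist (a, z) (k, l)"
    and "grid_dist (a, z'') (i, j) = grid_dist (a, z'') (k, l)"
  shows "j = l \<or> (j \<le> z \<and> l \<le> z) \<or> (z'' \<le> j \<and> z'' \<le> l)"
proof -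
  have "\<bar>int z - int j\<bar> - \<bar>int z'' - int j\<bar> = \<bar>int z - int l\<bar> - \<bar>int z'' - int l\<bar>"
    using assms(2,3) unfolding grid_dist_def by simp
  then show ?thesis
    using \<open>z < z''\<close> by (auto simp: abs_if split: if_splits)
qed

lemma grid_dist_eq_at_landmarks_imp_eq:
  assumes "(i, j) \<in> grid_vertices m n" "(k, l) \<in> grid_vertices m n"
    and "z < z'" "z' < z''"
    and d1: "grid_dist (1, z) (i, j) = grid_dist (1, z) (k, l)"
    and d2: "grid_dist (m, z') (i, j) = grid_dist (m, z') (k, l)"
    and d3: "grid_dist (1, z'') (i, j) = grid_dist (1, z'') (k, l)"
  shows "(i, j) = (k, l)"
proof -
  have rows: "1 \<le> i" "i \<le> m" "1 \<le> k" "k \<le> m"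
    using assms(1,2) by (auto simp: grid_vertices_def)
  have "z < z''" using assms(3,4) by simp
  from grid_dist_same_row_eq_cases[OF this d1 d3]
  consider "j = l" | "j \<le> z" "l \<le> z" | "z'' \<le> j" "z'' \<le> l" by blast
  then show ?thesis
  proof cases
    case 1
    then show ?thesis using d1 rows by (simp add: grid_dist_def)
  next
    case 2
    then show ?thesis using d1 d2 rows assms(3) by (simp add: grid_dist_def)
  next
    case 3
    then show ?thesis using d1 d2 rows assms(3,4) by (simp add: grid_dist_def)
  qed
qed

theorem mainTheorem13:
  fixes m n z z' z'' :: nat
  assumes "m \<ge> 2" and "n \<ge> 2"
    and "1 \<le> z" and "z < z'" and "z' < z''" and "z'' \<le> n"
  shows "is_landmark_set m n {(1, z), (m, z'), (1, z'')}"
  unfolding is_landmark_set_def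
proof (intro conjI ballI impI)
  show "{(1, z), (m, z'), (1, z'')} \<subseteq> grid_vertices m n"
    using assms by (auto simp: grid_vertices_def)
next
  fix u v
  assume "u \<in> grid_vertices m n" "v \<in> grid_vertices m n" "u \<noteq> v"
  then show "\<exists>x\<in>{(1, z), (m, z'), (1, z'')}. separates x u v"
    using grid_dist_eq_at_landmarks_imp_eq[OF _ _ \<open>z < z'\<close> \<open>z' < z''\<close>]
    by (cases u, cases v) (auto simp: separates_def)
qed

end
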